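(* Let $\tau:\mathbb{F}_p((t))^d\to\mathbb{F}_p((t))^d$, $(f_1,\dots,f_d)\mapsto(tf_1,\dots,tf_d)$, and let $V$ be a compact open subgroup of $\mathbb{F}_p((t))^d$ such that $\tau(V)$ is a proper subgroup of $V$. Then there is an automorphism $\theta$ of the topological group $\mathbb{F}_p((t))^d$ such that $\theta\circ\tau=\tau\circ\theta$ and $\theta(\mathbb{F}_p[[t]]^d)=V$.
   Context: $\mathbb{F}_p((t))$ is the additive group of formal Laurent series over $\mathbb{F}_p$ with its usual locally compact topology, $\mathbb{F}_p[[t]]$ the compact open subgroup of power series; $\mathbb{F}_p((t))^d$ has the product topology. Automorphisms are of the additive topological group, not necessarily $\mathbb{F}_p((t))$-linear. *)

theory Defs
  imports "HOL-Analysis.Analysis" "HOL-Computational_Algebra.Formal_Laurent_Series"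
begin

text \<open>F_p((t)) is rendered as 'k fls for a finite field 'k of prime cardinality,
  with the library metric topology on fls (the t-adic topology); the d-fold power is
  'k fls ^ 'd with the product topology (vec instance).\<close>

definition tau_mult :: "('k::field fls) ^ 'd \<Rightarrow> ('k fls) ^ 'd" where
  "tau_mult x = (\<chi> i. fls_X * x $ i)"

definition fls_integers :: "'k::field fls set" where
  "fls_integers = {f. f = 0 \<or> 0 \<le> fls_subdegree f}"

definition add_subgroup :: "('a::ab_group_add) set \<Rightarrow> bool" where
  "add_subgroup H \<longleftrightarrow> 0 \<in> H \<and> (\<forall>x\<in>H. \<forall>y\<in>H. x + y \<in> H) \<and> (\<forall>x\<in>H. - x \<in> H)"

definition top_group_aut :: "('a::{ab_group_add,topological_space} \<Rightarrow> 'a) \<Rightarrow> bool" where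
  "top_group_aut \<theta> \<longleftrightarrow> (\<forall>x y. \<theta> (x + y) = \<theta> x + \<theta> y) \<and> (\<exists>\<theta>'. homeomorphism UNIV UNIV \<theta> \<theta>')"

end

theory Submission
  imports Defs "HOL-Number_Theory.Residues"
begin

text \<open>
  Being open and compact, \<open>V\<close> lies between \<open>t\<^sup>N O\<^sup>d\<close> and \<open>t\<^sup>-\<^sup>M O\<^sup>d\<close>, where
  \<open>O = F\<^sub>p[[t]]\<close>. As an additive group closed under multiplication by \<open>t\<close> it is
  closed under multiplication by polynomials in \<open>t\<close> over the prime field, and since high
  powers of \<open>t\<close> carry \<open>V\<close> into \<open>t\<^sup>N O\<^sup>d \<subseteq> V\<close>, it is an \<open>O\<close>-module. Ordering the
  coordinates, pick for each \<open>i\<close> a vector \<open>b\<^sub>i \<in> V\<close> vanishing beyond coordinate \<open>i\<close> whose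
  \<open>i\<close>-th coordinate has least valuation. Gaussian elimination shows that the \<open>b\<^sub>i\<close> span \<open>V\<close>
  over \<open>O\<close>, so the linear map with columns \<open>b\<^sub>i\<close> carries \<open>O\<^sup>d\<close> onto \<open>V\<close>. It is
  triangular with nonzero diagonal, hence invertible; linear maps are continuous for the
  \<open>t\<close>-adic topology and commute with multiplication by \<open>t\<close>. Only \<open>\<tau>(V) \<subseteq> V\<close> is used,
  not properness.
\<close>

unbundle fps_syntax
no_notation fps_nth (infixl \<open>$\<close> 75)

lemma add_subgroup_diff: "add_subgroup H \<Longrightarrow> x \<in> H \<Longrightarrow> y \<in> H \<Longrightarrow> x - y \<in> H"
  unfolding add_subgroup_def by (metis diff_conv_add_uminus)

lemma add_subgroup_sum:
  "add_subgroup H \<Longrightarrow> (\<And>i. i \<in> A \<Longrightarrow> f i \<in> H) \<Longrightarrow> sum f A \<in> H"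
  by (induction A rule: infinite_finite_induct) (auto simp: add_subgroup_def)

lemma add_subgroup_of_nat_smult:
  fixes x :: "'a::ring_1 ^ 'n"
  shows "add_subgroup H \<Longrightarrow> x \<in> H \<Longrightarrow> of_nat m *s x \<in> H"
  by (induction m) (auto simp: add_subgroup_def vector_sadd_rdistrib)

section \<open>Valuation lattices\<close>

text \<open>\<open>fls_val_ge N\<close> is \<open>t\<^sup>N F\<^sub>p[[t]]\<close> and \<open>vec_val_ge N\<close> its \<open>d\<close>-th power.\<close>

definition fls_val_ge :: "int \<Rightarrow> 'a::zero fls set" where
  "fls_val_ge N = {f. \<forall>k<N. f $$ k = 0}"

definition vec_val_ge :: "int \<Rightarrow> ('a::zero fls ^ 'n) set" where
  "vec_val_ge N = {x. \<forall>i. x $ i \<in> fls_val_ge N}"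

lemma fls_val_ge_iff_subdegree: "f \<in> fls_val_ge N \<longleftrightarrow> f = 0 \<or> N \<le> fls_subdegree f"
  by (auto simp: fls_val_ge_def intro: fls_subdegree_geI)

lemma fls_integers_eq_fls_val_ge: "fls_integers = fls_val_ge 0"
  by (auto simp: fls_integers_def fls_val_ge_iff_subdegree)

lemma fls_val_ge_mono: "M \<le> N \<Longrightarrow> fls_val_ge N \<subseteq> fls_val_ge M"
  by (auto simp: fls_val_ge_def)

lemma vec_val_ge_mono: "M \<le> N \<Longrightarrow> vec_val_ge N \<subseteq> vec_val_ge M"
  using fls_val_ge_mono by (fastforce simp: vec_val_ge_def)

lemma fls_val_ge_mult:
  fixes f g :: "'a::semiring_no_zero_divisors fls"
  shows "f \<in> fls_val_ge M \<Longrightarrow> g \<in> fls_val_ge N \<Longrightarrow> f * g \<in> fls_val_ge (M + N)"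
  by (cases "f = 0 \<or> g = 0") (auto simp: fls_val_ge_iff_subdegree)

lemma fls_X_intpow_in_fls_val_ge: "(fls_X_intpow k :: 'a::semiring_1 fls) \<in> fls_val_ge k"
  by (simp add: fls_val_ge_iff_subdegree)

lemma vec_val_ge_smult:
  fixes c :: "'a::semiring_no_zero_divisors fls"
  shows "c \<in> fls_val_ge M \<Longrightarrow> x \<in> vec_val_ge N \<Longrightarrow> c *s x \<in> vec_val_ge (M + N)"
  by (simp add: vec_val_ge_def fls_val_ge_mult)

lemma add_subgroup_fls_val_ge: "add_subgroup (fls_val_ge N :: 'a::ab_group_add fls set)"
  by (simp add: add_subgroup_def fls_val_ge_def)

lemma add_subgroup_vec_val_ge: "add_subgroup (vec_val_ge N :: ('a::ab_group_add fls ^ 'n) set)"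
  using add_subgroup_fls_val_ge[of N, where 'a='a]
  by (simp add: add_subgroup_def vec_val_ge_def)

lemma finite_subset_vec_val_ge:
  fixes A :: "('a::zero fls ^ 'n) set"
  assumes "finite A"
  shows "\<exists>N. A \<subseteq> vec_val_ge N"
proof -
  define N where "N = - (\<Sum>x\<in>A. \<Sum>i\<in>UNIV. \<bar>fls_subdegree (x $ i)\<bar>)"
  have "N \<le> fls_subdegree (x $ i)" if "x \<in> A" for x i
  proof -
    have "\<bar>fls_subdegree (x $ i)\<bar> \<le> (\<Sum>i\<in>UNIV. \<bar>fls_subdegree (x $ i)\<bar>)"
      by (rule member_le_sum) auto
    also have "\<dots> \<le> (\<Sum>x\<in>A. \<Sum>i\<in>UNIV. \<bar>fls_subdegree (x $ i)\<bar>)"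
      using assms that by (intro member_le_sum) (auto intro: sum_nonneg)
    finally show ?thesis by (simp add: N_def)
  qed
  then show ?thesis
    by (auto simp: vec_val_ge_def fls_val_ge_iff_subdegree)
qed

section \<open>The t-adic metric\<close>

lemma dist_fls_eq_dist_diff_0: "dist f g = dist (f - g) (0 :: 'a::group_add fls)"
  by (simp add: dist_fls_def)

lemma dist_vec_fls_eq_dist_diff_0: "dist x y = dist (x - y) (0 :: 'a::group_add fls ^ 'n)"
  by (simp add: dist_vec_def dist_fls_eq_dist_diff_0[of "x $ _"])

lemma dist_0_le_if_fls_val_ge:
  assumes "f \<in> fls_val_ge (int n)"
  shows "dist f 0 \<le> inverse (2 ^ n)"
proof (cases "f = 0")
  case False
  then have "int n \<le> fls_subdegree f" using assms by (simp add: fls_val_ge_iff_subdegree)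
  then have "(2::real) ^ n \<le> 2 ^ nat (fls_subdegree f)"
    by (intro power_increasing) auto
  then show ?thesis using False \<open>int n \<le> fls_subdegree f\<close>
    by (simp add: dist_fls_def le_imp_inverse_le)
qed simp

lemma fls_val_ge_if_dist_0_less:
  assumes "dist f 0 < inverse (2 ^ n)"
  shows "f \<in> fls_val_ge (int n)"
proof (cases "f = 0 \<or> fls_subdegree f < 0")
  case False
  then have "(2::real) ^ n < 2 ^ nat (fls_subdegree f)"
    using assms by (simp add: dist_fls_def inverse_less_iff_less)
  then have "n < nat (fls_subdegree f)" using power_less_imp_less_exp by fastforce
  then show ?thesis by (auto simp: fls_val_ge_iff_subdegree)
next
  case True
  show ?thesis
  proof (rule ccontr)
    assume "f \<notin> fls_val_ge (int n)"
    then have "dist f 0 = 2 ^ nat (- fls_subdegree f)"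
      using True by (auto simp: dist_fls_def fls_val_ge_iff_subdegree)
    moreover have "(1::real) \<le> 2 ^ nat (- fls_subdegree f)" by simp
    moreover have "inverse ((2::real) ^ n) \<le> 1" by (simp add: inverse_le_1_iff)
    ultimately show False using assms by linarith
  qed
qed

lemma fls_val_ge_if_dist_0_le:
  assumes "dist f 0 \<le> (2::real) ^ m"
  shows "f \<in> fls_val_ge (- int m)"
proof (rule ccontr)
  assume "f \<notin> fls_val_ge (- int m)"
  then have f: "f \<noteq> 0" "fls_subdegree f < - int m" by (auto simp: fls_val_ge_iff_subdegree)
  then have "(2::real) ^ m < 2 ^ nat (- fls_subdegree f)"
    by (intro power_strict_increasing) auto
  then show False using f assms by (simp add: dist_fls_def)
qed

lemma dist_vec_le_if_diff_vec_val_ge: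
  fixes x y :: "'a::group_add fls ^ 'n"
  assumes "x - y \<in> vec_val_ge (int n)"
  shows "dist x y \<le> CARD('n) * inverse (2 ^ n)"
proof -
  have "dist x y = L2_set (\<lambda>i. dist (x $ i) (y $ i)) UNIV" by (simp add: dist_vec_def)
  also have "\<dots> \<le> (\<Sum>i\<in>UNIV. dist (x $ i) (y $ i))" by (rule L2_set_le_sum) simp
  also have "\<dots> \<le> (\<Sum>i\<in>(UNIV::'n set). inverse (2 ^ n))"
  proof (rule sum_mono)
    fix i
    have "x $ i - y $ i \<in> fls_val_ge (int n)" using assms by (simp add: vec_val_ge_def)
    then show "dist (x $ i) (y $ i) \<le> inverse (2 ^ n)"
      by (subst dist_fls_eq_dist_diff_0) (rule dist_0_le_if_fls_val_ge)
  qed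
  finally show ?thesis by simp
qed

lemma vec_val_ge_subset_ball_0:
  assumes "0 < e"
  shows "\<exists>n. vec_val_ge (int n) \<subseteq> ball (0 :: 'a::group_add fls ^ 'n) e"
proof -
  obtain n where "CARD('n) / e < 2 ^ n" using real_arch_pow[of 2] by auto
  then have "CARD('n) * inverse (2 ^ n) < e" using assms by (simp add: field_simps)
  then have "vec_val_ge (int n) \<subseteq> ball (0 :: 'a fls ^ 'n) e"
    using dist_vec_le_if_diff_vec_val_ge[of _ 0 n] by (force simp: dist_commute)
  then show ?thesis ..
qed

lemma open_imp_vec_val_ge_subset:
  fixes V :: "('a::group_add fls ^ 'n) set"
  assumes "open V" "0 \<in> V"
  shows "\<exists>n. vec_val_ge (int n) \<subseteq> V"
  using assms vec_val_ge_subset_ball_0 by (meson open_contains_ball_eq subset_trans)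

lemma bounded_imp_subset_vec_val_ge:
  fixes V :: "('a::group_add fls ^ 'n) set"
  assumes "bounded V"
  shows "\<exists>m. V \<subseteq> vec_val_ge (- int m)"
proof -
  obtain r where r: "\<forall>x\<in>V. dist x 0 \<le> r"
    using assms bounded_any_center[of V 0] by (auto simp: dist_commute)
  obtain m where "r < 2 ^ m" using real_arch_pow[of 2] by auto
  have "x $ i \<in> fls_val_ge (- int m)" if "x \<in> V" for x i
  proof (rule fls_val_ge_if_dist_0_le)
    show "dist (x $ i) 0 \<le> 2 ^ m"
      using r that dist_vec_nth_le[of x i 0] \<open>r < 2 ^ m\<close> by force
  qed
  then have "V \<subseteq> vec_val_ge (- int m)" by (auto simp: vec_val_ge_def)
  then show ?thesis ..
qed

lemma linear_image_vec_val_ge: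
  fixes L :: "'a::field fls ^ 'n \<Rightarrow> 'a fls ^ 'm"
  assumes "Vector_Spaces.linear (*s) (*s) L"
  shows "\<exists>m. \<forall>k. L ` vec_val_ge k \<subseteq> vec_val_ge (k - int m)"
proof -
  obtain N where N: "range (\<lambda>i. L (axis i 1)) \<subseteq> vec_val_ge N"
    using finite_subset_vec_val_ge[of "range (\<lambda>i. L (axis i 1))"] by auto
  have "L x \<in> vec_val_ge (k - int (nat (- N)))" if "x \<in> vec_val_ge k" for x k
  proof -
    have "L x = (\<Sum>i\<in>UNIV. x $ i *s L (axis i 1))"
      using linear_componentwise[OF assms, of x] by (simp add: vec_eq_iff sum_component)
    also have "\<dots> \<in> vec_val_ge (k + N)"
      using that N by (intro add_subgroup_sum add_subgroup_vec_val_ge vec_val_ge_smult)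
        (auto simp: vec_val_ge_def)
    finally show ?thesis using vec_val_ge_mono[of "k - int (nat (- N))" "k + N"] by auto
  qed
  then show ?thesis by blast
qed

lemma continuous_on_linear_fls_vec:
  fixes L :: "'a::field fls ^ 'n \<Rightarrow> 'a fls ^ 'm"
  assumes "Vector_Spaces.linear (*s) (*s) L"
  shows "continuous_on UNIV L"
  unfolding continuous_on_iff
proof (intro ballI allI impI)
  fix x :: "'a fls ^ 'n" and e :: real
  assume "0 < e"
  then obtain n where n: "vec_val_ge (int n) \<subseteq> ball (0 :: 'a fls ^ 'm) e"
    using vec_val_ge_subset_ball_0 by blast
  obtain m where m: "\<And>k. L ` vec_val_ge k \<subseteq> vec_val_ge (k - int m)"
    using linear_image_vec_val_ge[OF assms] by blast
  have "dist (L y) (L x) < e" if "dist y x < inverse (2 ^ (n + m))" for y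
  proof -
    have "y $ i - x $ i \<in> fls_val_ge (int (n + m))" for i
      using that dist_vec_nth_le[of y i x]
      by (intro fls_val_ge_if_dist_0_less) (simp add: dist_fls_eq_dist_diff_0[symmetric])
    then have "y - x \<in> vec_val_ge (int (n + m))" by (simp add: vec_val_ge_def)
    then have "L (y - x) \<in> vec_val_ge (int n)" using m[of "int (n + m)"] by auto
    then have "L y - L x \<in> ball 0 e" using n vec.linear_diff[OF assms] by auto
    then show ?thesis by (metis mem_ball dist_commute dist_vec_fls_eq_dist_diff_0)
  qed
  then show "\<exists>d>0. \<forall>y\<in>UNIV. dist y x < d \<longrightarrow> dist (L y) (L x) < e"
    by (intro exI[of _ "inverse (2 ^ (n + m))"]) auto
qed

lemma top_group_aut_if_linear_inj:
  fixes \<theta> :: "'a::field fls ^ 'n \<Rightarrow> 'a fls ^ 'n"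
  assumes lin: "Vector_Spaces.linear (*s) (*s) \<theta>" and "inj \<theta>"
  shows "top_group_aut \<theta>"
proof -
  obtain \<theta>' where lin': "Vector_Spaces.linear (*s) (*s) \<theta>'"
    and inv: "\<And>x. \<theta>' (\<theta> x) = x" "\<And>x. \<theta> (\<theta>' x) = x"
    using vec.linear_injective_isomorphism[OF lin \<open>inj \<theta>\<close>] by blast
  have "surj \<theta>" "surj \<theta>'" using inv by (metis surjI)+
  then have "homeomorphism UNIV UNIV \<theta> \<theta>'"
    using inv continuous_on_linear_fls_vec[OF lin] continuous_on_linear_fls_vec[OF lin']
    by (simp add: homeomorphism_def)
  then show ?thesis
    using vec.linear_add[OF lin] by (auto simp: top_group_aut_def)
qed

lemma tau_mult_eq_smult: "tau_mult x = fls_X *s x"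
  by (simp add: tau_mult_def vector_scalar_mult_def)

lemma linear_comp_tau_mult:
  fixes \<theta> :: "'a::field fls ^ 'n \<Rightarrow> 'a fls ^ 'm"
  assumes "Vector_Spaces.linear (*s) (*s) \<theta>"
  shows "\<theta> \<circ> tau_mult = tau_mult \<circ> \<theta>"
  using vec.linear_scale[OF assms] by (simp add: fun_eq_iff tau_mult_eq_smult)

definition matrix_of_columns :: "('n \<Rightarrow> 'a ^ 'm) \<Rightarrow> 'a ^ 'n ^ 'm" where
  "matrix_of_columns b = (\<chi> i j. b j $ i)"

lemma matrix_of_columns_mult:
  "matrix_of_columns b *v x = (\<Sum>j\<in>UNIV. x $ j *s b j :: 'a::comm_semiring_1 ^ 'm)"
  by (simp add: matrix_of_columns_def matrix_vector_mult_def vec_eq_iff sum_component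
      mult.commute)

lemma matrix_of_columns_mult_axis:
  "matrix_of_columns b *v axis i c = c *s (b i :: 'a::comm_semiring_1 ^ 'm)"
  by (simp add: matrix_of_columns_mult axis_def if_distrib[of "\<lambda>a. a *s _"] cong: if_cong)

lemma inj_matrix_vector_mult_if_triangular:
  fixes A :: "'a::field ^ 'n ^ 'n" and e :: "'n \<Rightarrow> nat"
  assumes "inj e" "\<And>i. A $ i $ i \<noteq> 0" "\<And>i j. e j < e i \<Longrightarrow> A $ i $ j = 0"
  shows "inj ((*v) A)"
  unfolding vec.linear_inj_iff_eq_0[OF matrix_vector_mul_linear_gen]
proof (intro allI impI)
  fix x :: "'a ^ 'n"
  assume Ax: "A *v x = 0"
  show "x = 0"
  proof (rule ccontr)
    assume "x \<noteq> 0"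
    then have "e ` {j. x $ j \<noteq> 0} \<noteq> {}" by (auto simp: vec_eq_iff)
    then have "Max (e ` {j. x $ j \<noteq> 0}) \<in> e ` {j. x $ j \<noteq> 0}" by (simp add: Max_in)
    then obtain i where i: "x $ i \<noteq> 0" "e i = Max (e ` {j. x $ j \<noteq> 0})" by auto
    then have max: "e j \<le> e i" if "x $ j \<noteq> 0" for j
      using that by simp
    have "A $ i $ j * x $ j = 0" if "j \<noteq> i" for j
      using max[of j] assms(3)[of j i] inj_eq[OF assms(1), of j i] that
      by (cases "x $ j = 0") auto
    then have "(A *v x) $ i = A $ i $ i * x $ i"
      by (simp add: matrix_vector_mult_def sum.remove[of UNIV i] sum.neutral)
    then show False using Ax i(1) assms(2)[of i] by simp
  qed
qed

section \<open>Lattices stable under multiplication by t\<close>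

lemma prime_card_field_eq_of_nat:
  assumes "prime CARD('k::{field,finite})"
  shows "\<exists>n. (a::'k) = of_nat n"
proof -
  have "CHAR('k) = CARD('k)"
    using CHAR_dvd_CARD[where 'a='k] CHAR_not_1[where 'a='k] assms
    by (metis One_nat_def prime_nat_iff)
  moreover have "inj_on (of_nat :: nat \<Rightarrow> 'k) {..<CHAR('k)}"
    by (intro inj_onI) (auto simp: of_nat_eq_iff_cong_CHAR cong_def)
  ultimately have "(of_nat :: nat \<Rightarrow> 'k) ` {..<CHAR('k)} = UNIV"
    by (intro card_subset_eq) (auto simp: card_image)
  then show ?thesis by auto
qed

lemma fls_const_mult_X_power_nth:
  "(fls_const a * fls_X ^ m) $$ k = (if k = int m then a else (0::'a::semiring_1))"
  by (simp add: fls_X_power_times_conv_shift(2) fls_times_fps_to_fls)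

lemma fls_val_ge_0_decompose:
  fixes f :: "'a::comm_ring_1 fls"
  assumes "f \<in> fls_val_ge 0"
  shows "\<exists>a r. f = (\<Sum>k<n. fls_const (a k) * fls_X ^ k) + r \<and> r \<in> fls_val_ge (int n)"
proof (induction n)
  case 0
  show ?case using assms by auto
next
  case (Suc n)
  then obtain a r where f: "f = (\<Sum>k<n. fls_const (a k) * fls_X ^ k) + r"
    and r: "r \<in> fls_val_ge (int n)" by blast
  define r' where "r' = r - fls_const (r $$ int n) * fls_X ^ n"
  have "r' \<in> fls_val_ge (int (Suc n))"
    using r by (auto simp: fls_val_ge_def r'_def fls_const_mult_X_power_nth)
  moreover have "f = (\<Sum>k<Suc n. fls_const ((a(n := r $$ int n)) k) * fls_X ^ k) + r'"
    by (simp add: f r'_def)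
  ultimately show ?case by blast
qed

text \<open>
  Write \<open>c\<close> as a polynomial plus a multiple of a high power of \<open>t\<close>: the polynomial acts by
  sums of \<open>t\<close>-shifts and prime-field multiples, the remainder carries \<open>v\<close> into \<open>t\<^sup>N O\<^sup>d\<close>.
\<close>

lemma tau_stable_subgroup_smult_closed:
  fixes V :: "('k::{field,finite} fls ^ 'n) set"
  assumes "prime CARD('k)" and V: "add_subgroup V" "tau_mult ` V \<subseteq> V" "vec_val_ge N \<subseteq> V"
    and "c \<in> fls_val_ge 0" "v \<in> V"
  shows "c *s v \<in> V"
proof -
  have const_closed: "fls_const a *s w \<in> V" if "w \<in> V" for a w
  proof -
    obtain m where "a = of_nat m" using prime_card_field_eq_of_nat[OF assms(1)] by blast
    then show ?thesis using add_subgroup_of_nat_smult[OF V(1) that] by (simp add: fls_of_nat)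
  qed
  have X_power_closed: "fls_X ^ k *s w \<in> V" if "w \<in> V" for k w
  proof (induction k)
    case (Suc k)
    then have "tau_mult (fls_X ^ k *s w) \<in> V" using V(2) by blast
    then show ?case by (simp add: tau_mult_eq_smult vector_smult_assoc)
  qed (simp add: that)
  obtain M where M: "v \<in> vec_val_ge M" using finite_subset_vec_val_ge[of "{v}"] by auto
  obtain a r where c: "c = (\<Sum>k<nat (N - M). fls_const (a k) * fls_X ^ k) + r"
    and r: "r \<in> fls_val_ge (int (nat (N - M)))"
    using fls_val_ge_0_decompose[OF assms(5)] by blast
  have "(\<Sum>k<nat (N - M). fls_const (a k) *s (fls_X ^ k *s v)) \<in> V"
    by (intro add_subgroup_sum[OF V(1)] const_closed X_power_closed \<open>v \<in> V\<close>)
  moreover have "N \<le> int (nat (N - M)) + M" by linarith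
  then have "r *s v \<in> V"
    using vec_val_ge_smult[OF r M] vec_val_ge_mono V(3) by blast
  ultimately have "(\<Sum>k<nat (N - M). fls_const (a k) *s (fls_X ^ k *s v)) + r *s v \<in> V"
    using V(1) by (simp add: add_subgroup_def)
  then show ?thesis
    by (simp add: c vector_sadd_rdistrib vec.scale_sum_left vector_smult_assoc)
qed

lemma matrix_of_columns_image_subset:
  fixes V :: "('k::{field,finite} fls ^ 'n) set" and b :: "'i::finite \<Rightarrow> 'k fls ^ 'n"
  assumes "prime CARD('k)" "add_subgroup V" "tau_mult ` V \<subseteq> V" "vec_val_ge N \<subseteq> V"
    and "\<And>i. b i \<in> V"
  shows "(*v) (matrix_of_columns b) ` vec_val_ge 0 \<subseteq> V"
proof (rule image_subsetI)
  fix x :: "'k fls ^ 'i"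
  assume "x \<in> vec_val_ge 0"
  then show "matrix_of_columns b *v x \<in> V"
    unfolding matrix_of_columns_mult using assms
    by (intro add_subgroup_sum tau_stable_subgroup_smult_closed[of V N]) (auto simp: vec_val_ge_def)
qed

section \<open>Echelon bases\<close>

definition pivot_candidates ::
    "('a::zero fls ^ 'n) set \<Rightarrow> ('n \<Rightarrow> nat) \<Rightarrow> 'n \<Rightarrow> ('a fls ^ 'n) set" where
  "pivot_candidates V e i = {x \<in> V. (\<forall>j. e i < e j \<longrightarrow> x $ j = 0) \<and> x $ i \<noteq> 0}"

definition echelon_basis ::
    "('a::zero fls ^ 'n) set \<Rightarrow> ('n \<Rightarrow> nat) \<Rightarrow> ('n \<Rightarrow> 'a fls ^ 'n) \<Rightarrow> bool" where
  "echelon_basis V e b \<longleftrightarrow> (\<forall>i. b i \<in> pivot_candidates V e i \<and>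
     (\<forall>x \<in> pivot_candidates V e i. fls_subdegree (b i $ i) \<le> fls_subdegree (x $ i)))"

lemma echelon_basis_exists:
  fixes V :: "('a::semiring_1 fls ^ 'n) set"
  assumes "vec_val_ge N \<subseteq> V" "V \<subseteq> vec_val_ge M"
  shows "\<exists>b. echelon_basis V e b"
  unfolding echelon_basis_def
proof (rule choice, rule allI)
  fix i
  let ?C = "pivot_candidates V e i"
  have bound: "M \<le> fls_subdegree (x $ i)" if "x \<in> ?C" for x
    using that assms(2) by (auto simp: pivot_candidates_def vec_val_ge_def fls_val_ge_iff_subdegree)
  have "axis i (fls_X_intpow N) \<in> vec_val_ge N"
    using fls_X_intpow_in_fls_val_ge[of N] by (simp add: axis_def vec_val_ge_def fls_val_ge_def)
  then have "axis i (fls_X_intpow N) \<in> ?C"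
    using assms(1) by (auto simp: pivot_candidates_def axis_def)
  then obtain v where v: "v \<in> ?C"
    and least: "\<And>x. x \<in> ?C \<Longrightarrow>
      nat (fls_subdegree (v $ i) - M) \<le> nat (fls_subdegree (x $ i) - M)"
    using ex_has_least_nat[of "\<lambda>x. x \<in> ?C" _ "\<lambda>x. nat (fls_subdegree (x $ i) - M)"] by blast
  have "fls_subdegree (v $ i) \<le> fls_subdegree (x $ i)" if "x \<in> ?C" for x
    using least[OF that] bound[OF that] by (simp add: nat_le_eq_zle)
  then show "\<exists>v. v \<in> ?C \<and> (\<forall>x \<in> ?C. fls_subdegree (v $ i) \<le> fls_subdegree (x $ i))"
    using v by blast
qed

lemma echelon_basis_pivot_quotient:
  fixes b :: "'n \<Rightarrow> 'a::field fls ^ 'n"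
  assumes "echelon_basis V e b" "y \<in> V" "\<forall>j. e i < e j \<longrightarrow> y $ j = 0"
  shows "y $ i / b i $ i \<in> fls_val_ge 0"
proof (cases "y $ i = 0")
  case False
  have b: "b i \<in> pivot_candidates V e i"
    and min: "fls_subdegree (b i $ i) \<le> fls_subdegree (y $ i)"
    using assms False by (auto simp: echelon_basis_def pivot_candidates_def)
  define c where "c = y $ i / b i $ i"
  have "y $ i = c * b i $ i" "c \<noteq> 0"
    using b False by (auto simp: c_def pivot_candidates_def)
  then have "fls_subdegree (y $ i) = fls_subdegree c + fls_subdegree (b i $ i)"
    using b by (simp add: pivot_candidates_def)
  then show ?thesis using min by (simp add: c_def [symmetric] fls_val_ge_iff_subdegree)
qed (simp add: fls_val_ge_def)

lemma inj_matrix_of_columns_echelon_basis: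
  assumes "echelon_basis V e b" "inj e"
  shows "inj ((*v) (matrix_of_columns (b :: 'n \<Rightarrow> 'a::field fls ^ 'n)))"
  using assms
  by (intro inj_matrix_vector_mult_if_triangular[of e])
    (auto simp: matrix_of_columns_def echelon_basis_def pivot_candidates_def)

text \<open>
  One elimination step: minimality of the pivot valuation makes the multiplier of the pivot
  vector integral.
\<close>

lemma echelon_basis_eliminate:
  fixes V :: "('k::{field,finite} fls ^ 'n) set"
  assumes "prime CARD('k)" "add_subgroup V" "tau_mult ` V \<subseteq> V" "vec_val_ge N \<subseteq> V"
    and "inj e" "echelon_basis V e b"
    and "y \<in> V" "\<forall>j. e i < e j \<longrightarrow> y $ j = 0"
  shows "\<exists>c \<in> fls_val_ge 0. y - c *s b i \<in> V \<and> (\<forall>j. e i \<le> e j \<longrightarrow> (y - c *s b i) $ j = 0)"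
proof -
  have b: "b i \<in> V" "b i $ i \<noteq> 0" "\<And>j. e i < e j \<Longrightarrow> b i $ j = 0"
    using assms(6) by (auto simp: echelon_basis_def pivot_candidates_def)
  define c where "c = y $ i / b i $ i"
  have c: "c \<in> fls_val_ge 0"
    unfolding c_def using assms(6-8) by (rule echelon_basis_pivot_quotient)
  have "y - c *s b i \<in> V"
    using assms(1-4,7) b(1) c by (intro add_subgroup_diff tau_stable_subgroup_smult_closed) auto
  moreover have "(y - c *s b i) $ j = 0" if "e i \<le> e j" for j
  proof (cases "j = i")
    case False
    then have "e i < e j" using that inj_eq[OF assms(5)] by fastforce
    then show ?thesis using assms(8) b(3) by auto
  qed (simp add: c_def b(2))
  ultimately show ?thesis using c by blast
qed

lemma echelon_basis_spans:
  fixes V :: "('k::{field,finite} fls ^ 'n) set"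
  assumes "prime CARD('k)" "add_subgroup V" "tau_mult ` V \<subseteq> V" "vec_val_ge N \<subseteq> V"
    and "inj e" "echelon_basis V e b"
  shows "V \<subseteq> (*v) (matrix_of_columns b) ` vec_val_ge 0"
proof -
  have "y \<in> (*v) (matrix_of_columns b) ` vec_val_ge 0"
    if "y \<in> V" "\<forall>j. n \<le> e j \<longrightarrow> y $ j = 0" for n y
    using that
  proof (induction n arbitrary: y)
    case 0
    then have "y = 0" by (simp add: vec_eq_iff)
    moreover have "0 \<in> vec_val_ge 0" by (simp add: vec_val_ge_def fls_val_ge_def)
    ultimately show ?case by force
  next
    case (Suc n)
    show ?case
    proof (cases "\<exists>i. e i = n")
      case False
      then show ?thesis using Suc by (metis Suc_leI le_neq_implies_less)
    next
      case True
      then obtain i where i: "e i = n" by blast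
      then obtain c where c: "c \<in> fls_val_ge 0" and "y - c *s b i \<in> V"
        "\<forall>j. n \<le> e j \<longrightarrow> (y - c *s b i) $ j = 0"
        using echelon_basis_eliminate[OF assms Suc.prems(1), of i] Suc.prems(2) by auto
      then obtain w where w: "w \<in> vec_val_ge 0" "y - c *s b i = matrix_of_columns b *v w"
        using Suc.IH by blast
      have "w + axis i c \<in> vec_val_ge 0"
        using w(1) c add_subgroup_vec_val_ge[of 0]
        by (auto simp: add_subgroup_def vec_val_ge_def axis_def fls_val_ge_def)
      moreover have "y = matrix_of_columns b *v (w + axis i c)"
        using w(2) by (simp add: matrix_vector_right_distrib matrix_of_columns_mult_axis algebra_simps)
      ultimately show ?thesis by blast
    qed
  qed
  moreover have "\<forall>j. Suc (Max (range e)) \<le> e j \<longrightarrow> y $ j = 0" for y :: "'k fls ^ 'n"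
    by (simp add: not_less_eq_eq[symmetric])
  ultimately show ?thesis by blast
qed

theorem mainTheorem10:
  fixes V :: "(('k::{field,finite}) fls ^ 'd) set"
  assumes "prime CARD('k)"
    and "add_subgroup V" and "compact V" and "open V"
    and "tau_mult ` V \<subset> V"
  shows "\<exists>\<theta>. top_group_aut \<theta> \<and> \<theta> \<circ> tau_mult = tau_mult \<circ> \<theta>
            \<and> \<theta> ` {x. \<forall>i. x $ i \<in> fls_integers} = V"
proof -
  have tau: "tau_mult ` V \<subseteq> V" using assms(5) by blast
  obtain N where N: "vec_val_ge (int N) \<subseteq> V"
    using open_imp_vec_val_ge_subset[OF assms(4)] assms(2) by (auto simp: add_subgroup_def)
  obtain M where "V \<subseteq> vec_val_ge (- int M)"
    using bounded_imp_subset_vec_val_ge[OF compact_imp_bounded[OF assms(3)]] by blast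
  moreover obtain e :: "'d \<Rightarrow> nat" where "inj e"
    using finite_imp_inj_to_nat_seg[of "UNIV :: 'd set"] by auto
  ultimately obtain b where b: "echelon_basis V e b"
    using echelon_basis_exists[OF N] by blast
  let ?\<theta> = "(*v) (matrix_of_columns b)"
  have "top_group_aut ?\<theta>"
    using inj_matrix_of_columns_echelon_basis[OF b \<open>inj e\<close>]
    by (intro top_group_aut_if_linear_inj) auto
  moreover have "?\<theta> \<circ> tau_mult = tau_mult \<circ> ?\<theta>"
    by (intro linear_comp_tau_mult) auto
  moreover have "?\<theta> ` vec_val_ge 0 = V"
    using matrix_of_columns_image_subset[OF assms(1,2) tau N]
      echelon_basis_spans[OF assms(1,2) tau N \<open>inj e\<close> b] b
    by (auto simp: echelon_basis_def pivot_candidates_def)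
  ultimately show ?thesis
    by (auto simp: vec_val_ge_def fls_integers_eq_fls_val_ge)
qed

end
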